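(* For the system $$u_{0,0}-v_{1,1}=0,\qquad (u_{1,0}-u_{0,0})(v_{1,0}-u_{0,0})-(u_{0,1}-u_{0,0})(v_{0,1}-u_{0,0})=0,$$ the following pairs are conservation laws, i.e. satisfy $(\mathcal T-1)\rho=(\mathcal S-1)\sigma$ on solutions: $$(\rho_1,\sigma_1)=\Big(\ln\Big|\frac{v_{0,0}-u_{-1,0}}{(v_{1,0}-u_{-1,0})^2}\Big|,\ \ \ln\Big|\frac{(u_{-2,0}-v_{0,0})^2}{u_{-2,0}-u_{-1,0}}\Big|\Big),$$ $$(\varrho,\varsigma)=\big(\ln|v_{1,0}-u_{0,0}|,\ \ \ln|v_{0,1}-u_{0,0}|\big).$$
   Context: Unknowns $u,v$ on $\mathbb Z^2$, $u_{i,j}=u(n+i,m+j)$, similarly $v$. Shifts $\mathcal S:n\mapsto n+1$, $\mathcal T:m\mapsto m+1$, acting by $\mathcal S^k\mathcal T^\ell(f_{i,j})=f_{i+k,j+\ell}$. A conservation law is a pair $(\rho,\sigma)$ of functions of finitely many shifts of $(u,v)$ such that $(\mathcal T-1)\rho=(\mathcal S-1)\sigma$ holds for all solutions of the system (on which all arguments of logarithms and denominators are nonzero). *)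

theory Defs
  imports Complex_Main
begin

text \<open>Lattice fields u, v : Z^2 -> R; u i j stands for u(n+i, m+j) at base point (n,m).
  Shifts: S (n \<mapsto> n+1), T (m \<mapsto> m+1).\<close>

type_synonym field2 = "int \<Rightarrow> int \<Rightarrow> real"

definition is_solution :: "field2 \<Rightarrow> field2 \<Rightarrow> bool" where
  "is_solution u v \<longleftrightarrow> (\<forall>n m.
      u n m - v (n+1) (m+1) = 0 \<and>
      (u (n+1) m - u n m) * (v (n+1) m - u n m)
        - (u n (m+1) - u n m) * (v n (m+1) - u n m) = 0)"

definition is_conservation_law :: "field2 \<Rightarrow> field2 \<Rightarrow> bool" where
  "is_conservation_law rho sigma \<longleftrightarrow>
     (\<forall>n m. rho n (m+1) - rho n m = sigma (n+1) m - sigma n m)"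

definition rho1 :: "field2 \<Rightarrow> field2 \<Rightarrow> field2" where
  "rho1 u v n m = ln \<bar>(v n m - u (n-1) m) / (v (n+1) m - u (n-1) m)^2\<bar>"

definition sigma1 :: "field2 \<Rightarrow> field2 \<Rightarrow> field2" where
  "sigma1 u v n m = ln \<bar>(u (n-2) m - v n m)^2 / (u (n-2) m - u (n-1) m)\<bar>"

definition rho2 :: "field2 \<Rightarrow> field2 \<Rightarrow> field2" where
  "rho2 u v n m = ln \<bar>v (n+1) m - u n m\<bar>"

definition sigma2 :: "field2 \<Rightarrow> field2 \<Rightarrow> field2" where
  "sigma2 u v n m = ln \<bar>v n (m+1) - u n m\<bar>"

definition nondegenerate :: "field2 \<Rightarrow> field2 \<Rightarrow> bool" where
  "nondegenerate u v \<longleftrightarrow> (\<forall>n m.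
      v n m - u (n-1) m \<noteq> 0 \<and> v (n+1) m - u (n-1) m \<noteq> 0 \<and>
      u (n-2) m - v n m \<noteq> 0 \<and> u (n-2) m - u (n-1) m \<noteq> 0 \<and>
      v (n+1) m - u n m \<noteq> 0 \<and> v n (m+1) - u n m \<noteq> 0)"

end

theory Submission
  imports Defs
begin

text \<open>The first equation of the system says that v is u shifted back by one step in
  both directions, so the second equation becomes a relation between the values of u on the star of
  each lattice point (centre, right, up, left, down):
    (u(n+1,m) - u(n,m)) (u(n,m-1) - u(n,m)) = (u(n,m+1) - u(n,m)) (u(n-1,m) - u(n,m)).
  Both pairs have the form (ln|F|, ln|G|), and such a pair is a conservation law as soon as
  F(n,m+1) G(n,m) = F(n,m) G(n+1,m). For the second pair this product identity is the star relation
  itself; for the first pair it is a rational consequence of the star relation centred at (n-1,m).\<close>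

lemma is_conservation_law_ln_abs:
  fixes F G :: field2
  assumes "\<And>n m. F n m \<noteq> 0" and "\<And>n m. G n m \<noteq> 0"
    and "\<And>n m. F n (m+1) * G n m = F n m * G (n+1) m"
  shows "is_conservation_law (\<lambda>n m. ln \<bar>F n m\<bar>) (\<lambda>n m. ln \<bar>G n m\<bar>)"
  unfolding is_conservation_law_def
proof (intro allI)
  fix n m :: int
  have "ln \<bar>F n (m+1)\<bar> + ln \<bar>G n m\<bar> = ln (\<bar>F n (m+1)\<bar> * \<bar>G n m\<bar>)"
    using assms(1,2) by (simp add: ln_mult)
  also have "\<dots> = ln (\<bar>F n m\<bar> * \<bar>G (n+1) m\<bar>)"
    using assms(3) by (simp flip: abs_mult)
  also have "\<dots> = ln \<bar>F n m\<bar> + ln \<bar>G (n+1) m\<bar>"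
    using assms(1,2) by (simp add: ln_mult)
  finally show "ln \<bar>F n (m+1)\<bar> - ln \<bar>F n m\<bar> = ln \<bar>G (n+1) m\<bar> - ln \<bar>G n m\<bar>"
    by simp
qed

text \<open>The values around the centre a: x to the right, y above, z to the left, w below.\<close>
lemma star_relation_balance:
  fixes a x y z w :: real
  assumes star: "(x - a) * (w - a) = (y - a) * (z - a)"
    and "x \<noteq> a" "z \<noteq> a" "z \<noteq> w"
  shows "(a - y) / (x - y)^2 * ((z - w)^2 / (z - a)) = (w - a) / (a - x)"
proof -
  have xy: "x - y = (x - a) * (z - w) / (z - a)"
    using star assms(3) by (simp add: field_simps)
  have "c / (d * f / e)^2 * (f^2 / e) = c * e / d^2"
    if "d \<noteq> 0" "e \<noteq> 0" "f \<noteq> 0" for c d e f :: real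
    using that by (simp add: field_simps power2_eq_square)
  then have "(a - y) / (x - y)^2 * ((z - w)^2 / (z - a)) = (a - y) * (z - a) / (x - a)^2"
    unfolding xy using assms(2-4) by simp
  also have "\<dots> = - ((x - a) * (w - a)) / (x - a)^2"
    using star by (simp add: algebra_simps)
  also have "\<dots> = (w - a) / (a - x)"
    using assms(2) by (simp add: power2_eq_square divide_simps) (simp add: algebra_simps)
  finally show ?thesis .
qed

lemma solution_v_eq:
  assumes "is_solution u v"
  shows "v n m = u (n-1) (m-1)"
proof -
  have "u (n-1) (m-1) - v (n-1+1) (m-1+1) = 0"
    using assms unfolding is_solution_def by blast
  then show ?thesis by simp
qed

lemma solution_star_relation:
  assumes "is_solution u v"
  shows "(u (n+1) m - u n m) * (u n (m-1) - u n m) = (u n (m+1) - u n m) * (u (n-1) m - u n m)"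
proof -
  have "(u (n+1) m - u n m) * (v (n+1) m - u n m)
      - (u n (m+1) - u n m) * (v n (m+1) - u n m) = 0"
    using assms unfolding is_solution_def by blast
  then show ?thesis by (simp add: solution_v_eq[OF assms])
qed

lemma conservation_law_rho1_sigma1:
  assumes sol: "is_solution u v" and nd: "nondegenerate u v"
  shows "is_conservation_law (rho1 u v) (sigma1 u v)"
proof -
  define F where "F n m = (v n m - u (n-1) m) / (v (n+1) m - u (n-1) m)^2" for n m
  define G where "G n m = (u (n-2) m - v n m)^2 / (u (n-2) m - u (n-1) m)" for n m
  note v = solution_v_eq[OF sol]
  have nz: "v n m - u (n-1) m \<noteq> 0" "v (n+1) m - u (n-1) m \<noteq> 0" "u (n-2) m - v n m \<noteq> 0"
    "u (n-2) m - u (n-1) m \<noteq> 0" "v n (m+1) - u n m \<noteq> 0" for n m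
    using nd unfolding nondegenerate_def by blast+
  have "F n (m+1) * G n m = F n m * G (n+1) m" for n m
  proof -
    have "F n (m+1) * G n m
        = (u (n-1) m - u (n-1) (m+1)) / (u n m - u (n-1) (m+1))^2
          * ((u (n-2) m - u (n-1) (m-1))^2 / (u (n-2) m - u (n-1) m))"
      by (simp add: F_def G_def v)
    also have "\<dots> = (u (n-1) (m-1) - u (n-1) m) / (u (n-1) m - u n m)"
    proof (rule star_relation_balance)
      show "(u n m - u (n-1) m) * (u (n-1) (m-1) - u (n-1) m)
          = (u (n-1) (m+1) - u (n-1) m) * (u (n-2) m - u (n-1) m)"
        using solution_star_relation[OF sol, of "n-1" m] by simp
      show "u n m \<noteq> u (n-1) m" using nz(5)[of n m] by (simp add: v)
      show "u (n-2) m \<noteq> u (n-1) m" using nz(4)[of n m] by simp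
      show "u (n-2) m \<noteq> u (n-1) (m-1)" using nz(3)[of n m] by (simp add: v)
    qed
    also have "\<dots> = F n m * G (n+1) m"
      using nz(2)[of n m] by (simp add: F_def G_def v power2_commute[of "u (n-1) m"])
    finally show ?thesis .
  qed
  moreover have "F n m \<noteq> 0" "G n m \<noteq> 0" for n m
    using nz(1-4)[of n m] by (simp_all add: F_def G_def)
  ultimately have "is_conservation_law (\<lambda>n m. ln \<bar>F n m\<bar>) (\<lambda>n m. ln \<bar>G n m\<bar>)"
    by (intro is_conservation_law_ln_abs)
  then show ?thesis
    unfolding F_def G_def by (simp add: rho1_def[abs_def] sigma1_def[abs_def])
qed

lemma conservation_law_rho2_sigma2:
  assumes sol: "is_solution u v" and nd: "nondegenerate u v"
  shows "is_conservation_law (rho2 u v) (sigma2 u v)"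
proof -
  have "is_conservation_law (\<lambda>n m. ln \<bar>v (n+1) m - u n m\<bar>) (\<lambda>n m. ln \<bar>v n (m+1) - u n m\<bar>)"
  proof (rule is_conservation_law_ln_abs)
    show "v (n+1) m - u n m \<noteq> 0" "v n (m+1) - u n m \<noteq> 0" for n m
      using nd unfolding nondegenerate_def by blast+
    show "(v (n+1) (m+1) - u n (m+1)) * (v n (m+1) - u n m)
        = (v (n+1) m - u n m) * (v (n+1) (m+1) - u (n+1) m)" for n m
      using solution_star_relation[OF sol, of n m]
      by (simp add: solution_v_eq[OF sol] algebra_simps)
  qed
  then show ?thesis by (simp add: rho2_def[abs_def] sigma2_def[abs_def])
qed

theorem mainTheorem12:
  fixes u v :: "int \<Rightarrow> int \<Rightarrow> real"
  assumes "is_solution u v" and "nondegenerate u v"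
  shows "is_conservation_law (rho1 u v) (sigma1 u v) \<and>
         is_conservation_law (rho2 u v) (sigma2 u v)"
  using conservation_law_rho1_sigma1[OF assms] conservation_law_rho2_sigma2[OF assms] by blast

end
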